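(* Let $X_1,\dots,X_n$ be i.i.d. copies of a non-negative absolutely continuous random variable $X$, and let $1\le k\le n$. Let $\tau_{k|n}(\mathbf X)$ be the lifetime of the $k$-out-of-$n$ system with component lifetimes $X_1,\dots,X_n$, $(\tau_{k|n}(\mathbf X))_t=(\tau_{k|n}(\mathbf X)-t\mid\tau_{k|n}(\mathbf X)>t)$, and $\tau_{k|n}(\mathbf X_t)$ the lifetime of the $k$-out-of-$n$ system built from independent used components with lifetimes distributed as $(X_i-t\mid X_i>t)$. Then for any fixed $t\ge0$, $\tau_{k|n}(\mathbf X_t)\underset{c}{\prec}(\tau_{k|n}(\mathbf X))_t$.
   Context: All random variables are non-negative and absolutely continuous with support $[0,\infty)$. For a random variable $W$: density $f_W$, survival $\bar F_W$, hazard rate $r_W=f_W/\bar F_W$. $U\underset{c}{\prec}V$ means $r_U(x)/r_V(x)$ is increasing (non-decreasing) in $x\ge0$. A $k$-out-of-$n$ system functions as long as at least $k$ of its $n$ components function. *)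

theory Defs
  imports "HOL-Probability.Probability"
begin

definition surv :: "'a measure \<Rightarrow> ('a \<Rightarrow> real) \<Rightarrow> real \<Rightarrow> real" where
  "surv M W x = measure M {\<omega> \<in> space M. x < W \<omega>}"

definition resid_surv :: "'a measure \<Rightarrow> ('a \<Rightarrow> real) \<Rightarrow> real \<Rightarrow> real \<Rightarrow> real" where
  "resid_surv M W t x =
     measure M {\<omega> \<in> space M. t + x < W \<omega> \<and> t < W \<omega>} / measure M {\<omega> \<in> space M. t < W \<omega>}"

definition kofn_life :: "nat \<Rightarrow> nat \<Rightarrow> (nat \<Rightarrow> real) \<Rightarrow> real" where
  "kofn_life k n x = Sup {s. k \<le> card {i. i < n \<and> s < x i}}"

definition kofn_rv :: "nat \<Rightarrow> nat \<Rightarrow> (nat \<Rightarrow> 'a \<Rightarrow> real) \<Rightarrow> 'a \<Rightarrow> real" where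
  "kofn_rv k n X = (\<lambda>\<omega>. kofn_life k n (\<lambda>i. X i \<omega>))"

definition dens_of_surv :: "(real \<Rightarrow> real) \<Rightarrow> real \<Rightarrow> real" where
  "dens_of_surv G x = - (THE D. (G has_real_derivative D) (at_right x))"

definition hazard :: "(real \<Rightarrow> real) \<Rightarrow> real \<Rightarrow> real" where
  "hazard G x = dens_of_surv G x / G x"

text \<open>U <_c V (given by survival functions): r_U / r_V is non-decreasing on [0,\<infinity>).\<close>
definition c_order :: "(real \<Rightarrow> real) \<Rightarrow> (real \<Rightarrow> real) \<Rightarrow> bool" where
  "c_order GU GV \<longleftrightarrow> mono_on {0..} (\<lambda>x. hazard GU x / hazard GV x)"

end

theory Submission
  imports Defs
begin

text \<open>Let \<open>S\<close> be the survival function of a component, \<open>c = S t\<close> and \<open>p = S (t + x)\<close>.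
  A \<open>k\<close>-out-of-\<open>n\<close> system of independent components with common survival probability \<open>q\<close>
  survives with probability \<open>B q = Pr(Bin(n, q) \<ge> k)\<close>. The system of used components thus has
  survival function \<open>B (p / c)\<close>, the residual life of the new system \<open>B p / B c\<close>, and the ratio
  of their hazard rates at age \<open>x\<close> is \<open>(B'/B) (p / c) / c / (B'/B) p\<close>: the density of \<open>X\<close> cancels.
  Writing \<open>B q = q\<^sup>k (1 - q)\<^bsup>n-k\<^esup> P (q / (1 - q))\<close> with a polynomial \<open>P\<close> with nonnegative
  coefficients, this ratio becomes \<open>P z / P (z r)\<close> with \<open>z = p / (1 - p)\<close> and
  \<open>r = (1 - p) / (c - p) \<ge> 1\<close>. By total positivity of the monomials, \<open>P (z r) / P z\<close> is
  nondecreasing in \<open>z\<close> and in \<open>r\<close>; both grow with \<open>p\<close>, and \<open>p\<close> falls as \<open>x\<close> grows.\<close>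

section \<open>Binomial tail probabilities\<close>

definition binom_tail :: "nat \<Rightarrow> nat \<Rightarrow> real \<Rightarrow> real" where
  "binom_tail n k q = (\<Sum>j=k..n. real (n choose j) * q ^ j * (1 - q) ^ (n - j))"

definition binom_tail_deriv :: "nat \<Rightarrow> nat \<Rightarrow> real \<Rightarrow> real" where
  "binom_tail_deriv n k q = real n * real ((n - 1) choose (k - 1)) * q ^ (k - 1) * (1 - q) ^ (n - k)"

definition binom_tail_log_deriv :: "nat \<Rightarrow> nat \<Rightarrow> real \<Rightarrow> real" where
  "binom_tail_log_deriv n k q = binom_tail_deriv n k q / binom_tail n k q"

lemma binom_term_has_real_derivative:
  assumes "1 \<le> j" "j \<le> n"
  shows "((\<lambda>q. real (n choose j) * q ^ j * (1 - q) ^ (n - j)) has_real_derivative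
           binom_tail_deriv n j q - binom_tail_deriv n (Suc j) q) (at q)"
proof -
  have absorb_j: "real (n choose j) * real j = real n * real ((n - 1) choose (j - 1))"
    using assms by (metis One_nat_def Suc_pred binomial_absorb_comp less_eq_Suc_le
        times_binomial_minus1_eq mult.commute of_nat_mult)
  show ?thesis
  proof (cases "j = n")
    case True
    then show ?thesis
      using assms absorb_j by (auto simp: binom_tail_deriv_def intro!: derivative_eq_intros)
  next
    case False
    have absorb_nj: "real (n choose j) * real (n - j) = real n * real ((n - 1) choose j)"
      by (metis binomial_absorb_comp mult.commute of_nat_mult)
    have "binom_tail_deriv n j q = real (n choose j) * real j * q ^ (j - 1) * (1 - q) ^ (n - j)"
         "binom_tail_deriv n (Suc j) q = real (n choose j) * real (n - j) * q ^ j * (1 - q) ^ (n - Suc j)"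
      using absorb_j absorb_nj by (simp_all add: binom_tail_deriv_def)
    then show ?thesis
      by simp (rule derivative_eq_intros refl | simp add: algebra_simps)+
  qed
qed

lemma binom_tail_has_real_derivative:
  assumes "1 \<le> k" "k \<le> n"
  shows "(binom_tail n k has_real_derivative binom_tail_deriv n k q) (at q)"
proof -
  have "(binom_tail n k has_real_derivative
          (\<Sum>j=k..n. binom_tail_deriv n j q - binom_tail_deriv n (Suc j) q)) (at q)"
    unfolding binom_tail_def [abs_def]
    using assms by (intro DERIV_sum binom_term_has_real_derivative) auto
  moreover have "(\<Sum>j=k..n. binom_tail_deriv n j q - binom_tail_deriv n (Suc j) q)
      = binom_tail_deriv n k q - binom_tail_deriv n (Suc n) q"
    using sum_Suc_diff [of k n "\<lambda>j. - binom_tail_deriv n j q"] assms by simp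
  moreover have "binom_tail_deriv n (Suc n) q = 0"
    by (cases n) (simp_all add: binom_tail_deriv_def)
  ultimately show ?thesis
    by simp
qed

lemma binom_tail_pos:
  assumes "k \<le> n" "0 < q" "q \<le> 1"
  shows "0 < binom_tail n k q"
proof -
  have "real (n choose n) * q ^ n * (1 - q) ^ (n - n) \<le> binom_tail n k q"
    unfolding binom_tail_def using assms by (intro member_le_sum) auto
  moreover have "0 < real (n choose n) * q ^ n * (1 - q) ^ (n - n)"
    using assms by simp
  ultimately show ?thesis
    by linarith
qed

lemma binom_tail_log_deriv_nonneg:
  assumes "k \<le> n" "0 < q" "q \<le> 1"
  shows "0 \<le> binom_tail_log_deriv n k q"
  unfolding binom_tail_log_deriv_def binom_tail_deriv_def
  using assms binom_tail_pos [OF assms] by simp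

lemma binom_tail_log_deriv_top:
  assumes "0 < q"
  shows "binom_tail_log_deriv n n q = real n / q"
  using assms by (cases n) (simp_all add: binom_tail_log_deriv_def binom_tail_deriv_def binom_tail_def)

lemma binom_tail_log_deriv_one:
  assumes "k < n"
  shows "binom_tail_log_deriv n k 1 = 0"
  using assms by (simp add: binom_tail_log_deriv_def binom_tail_deriv_def)

definition binom_tail_poly :: "nat \<Rightarrow> nat \<Rightarrow> real \<Rightarrow> real" where
  "binom_tail_poly n k z = (\<Sum>j=k..n. real (n choose j) * z ^ (j - k))"

lemma binom_tail_eq_poly:
  assumes "q < 1"
  shows "binom_tail n k q = q ^ k * (1 - q) ^ (n - k) * binom_tail_poly n k (q / (1 - q))"
  unfolding binom_tail_def binom_tail_poly_def sum_distrib_left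
proof (rule sum.cong [OF refl])
  fix j assume j: "j \<in> {k..n}"
  have "q ^ j = q ^ k * q ^ (j - k)" "(1 - q) ^ (n - k) = (1 - q) ^ (n - j) * (1 - q) ^ (j - k)"
    using j by (simp_all flip: power_add)
  moreover have "1 - q \<noteq> 0"
    using assms by simp
  ultimately show "real (n choose j) * q ^ j * (1 - q) ^ (n - j) =
      q ^ k * (1 - q) ^ (n - k) * (real (n choose j) * (q / (1 - q)) ^ (j - k))"
    by (simp add: power_divide field_simps)
qed

lemma binom_tail_poly_pos:
  assumes "k \<le> n" "0 \<le> z"
  shows "0 < binom_tail_poly n k z"
proof -
  have "real (n choose k) * z ^ (k - k) \<le> binom_tail_poly n k z"
    unfolding binom_tail_poly_def using assms by (intro member_le_sum) auto
  moreover have "0 < real (n choose k) * z ^ (k - k)"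
    using assms by simp
  ultimately show ?thesis
    by linarith
qed

lemma binom_tail_poly_mono:
  assumes "0 \<le> z" "z \<le> z'"
  shows "binom_tail_poly n k z \<le> binom_tail_poly n k z'"
  unfolding binom_tail_poly_def using assms by (intro sum_mono mult_left_mono power_mono) auto

lemma binom_tail_log_deriv_eq_poly:
  assumes "1 \<le> k" "k \<le> n" "0 < q" "q < 1"
  shows "binom_tail_log_deriv n k q
    = real n * real ((n - 1) choose (k - 1)) / (q * binom_tail_poly n k (q / (1 - q)))"
proof -
  have "q ^ k = q * q ^ (k - 1)"
    using assms by (simp flip: power_Suc)
  moreover have "0 < binom_tail_poly n k (q / (1 - q))"
    using assms by (intro binom_tail_poly_pos) auto
  ultimately show ?thesis
    using assms unfolding binom_tail_log_deriv_def binom_tail_eq_poly [OF assms(4)]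
    by (simp add: binom_tail_deriv_def)
qed

lemma power_diffs_same_sign:
  fixes r z z' :: real
  assumes "1 \<le> r" "0 < z" "z \<le> z'"
  shows "0 \<le> (r ^ a - r ^ b) * (z' ^ a * z ^ b - z ^ a * z' ^ b)"
proof -
  have ordered: "0 \<le> (r ^ a - r ^ b) * (z' ^ a * z ^ b - z ^ a * z' ^ b)" if "b \<le> a" for a b
  proof -
    have "z ^ b * z' ^ b * z ^ (a - b) \<le> z ^ b * z' ^ b * z' ^ (a - b)"
      using assms by (intro mult_left_mono power_mono) auto
    moreover have "z ^ a = z ^ b * z ^ (a - b)" "z' ^ a = z' ^ b * z' ^ (a - b)"
      using that by (simp_all flip: power_add)
    ultimately have "z ^ a * z' ^ b \<le> z' ^ a * z ^ b"
      by (simp add: ac_simps)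
    moreover have "r ^ b \<le> r ^ a"
      using that assms by (intro power_increasing) auto
    ultimately show ?thesis
      by simp
  qed
  show ?thesis
    using ordered [of a b] ordered [of b a] by (cases "b \<le> a") (auto simp: algebra_simps)
qed

lemma sum_monomials_scaled_ratio_mono:
  fixes a :: "'i \<Rightarrow> real" and e :: "'i \<Rightarrow> nat"
  assumes "finite J" "\<And>i. i \<in> J \<Longrightarrow> 0 \<le> a i" "1 \<le> r" "0 < z" "z \<le> z'"
  shows "(\<Sum>i\<in>J. a i * (z * r) ^ e i) * (\<Sum>i\<in>J. a i * z' ^ e i)
       \<le> (\<Sum>i\<in>J. a i * (z' * r) ^ e i) * (\<Sum>i\<in>J. a i * z ^ e i)"
proof -
  define w where "w i j = a i * a j * r ^ e i * (z' ^ e i * z ^ e j - z ^ e i * z' ^ e j)" for i j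
  have diff: "(\<Sum>i\<in>J. a i * (z' * r) ^ e i) * (\<Sum>i\<in>J. a i * z ^ e i)
       - (\<Sum>i\<in>J. a i * (z * r) ^ e i) * (\<Sum>i\<in>J. a i * z' ^ e i) = (\<Sum>i\<in>J. \<Sum>j\<in>J. w i j)"
    unfolding sum_product sum_subtractf [symmetric] w_def
    by (intro sum.cong refl) (simp only: power_mult_distrib algebra_simps)
  have "0 \<le> (\<Sum>i\<in>J. \<Sum>j\<in>J. w i j + w j i)"
  proof (intro sum_nonneg)
    fix i j assume "i \<in> J" "j \<in> J"
    then have "0 \<le> a i * a j * ((r ^ e i - r ^ e j) * (z' ^ e i * z ^ e j - z ^ e i * z' ^ e j))"
      using assms power_diffs_same_sign [OF assms(3-5)] by simp
    then show "0 \<le> w i j + w j i"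
      unfolding w_def by (simp only: algebra_simps)
  qed
  also have "\<dots> = 2 * (\<Sum>i\<in>J. \<Sum>j\<in>J. w i j)"
    using sum.swap [of w J J] by (simp add: sum.distrib)
  finally show ?thesis
    using diff by linarith
qed

lemma binom_tail_poly_ratio_mono:
  assumes "1 \<le> r" "r \<le> r'" "0 < z" "z \<le> z'"
  shows "binom_tail_poly n k (z * r) * binom_tail_poly n k z'
    \<le> binom_tail_poly n k (z' * r') * binom_tail_poly n k z"
proof -
  have "binom_tail_poly n k (z * r) * binom_tail_poly n k z'
      \<le> binom_tail_poly n k (z' * r) * binom_tail_poly n k z"
    unfolding binom_tail_poly_def using assms
    by (intro sum_monomials_scaled_ratio_mono) auto
  also have "\<dots> \<le> binom_tail_poly n k (z' * r') * binom_tail_poly n k z"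
    using assms by (intro mult_right_mono binom_tail_poly_mono)
      (auto simp: binom_tail_poly_def intro!: sum_nonneg)
  finally show ?thesis .
qed

text \<open>Ratio of the hazard rate of the system of used components to that of the residual life
  of the system at age \<open>x\<close>, in terms of \<open>c = S t\<close> and \<open>p = S (t + x)\<close> for the component
  survival function \<open>S\<close>.\<close>
definition kofn_hazard_ratio :: "nat \<Rightarrow> nat \<Rightarrow> real \<Rightarrow> real \<Rightarrow> real" where
  "kofn_hazard_ratio n k c p = binom_tail_log_deriv n k (p / c) / c / binom_tail_log_deriv n k p"

lemma kofn_hazard_ratio_eq_poly:
  assumes "1 \<le> k" "k \<le> n" "0 < p" "p < c" "c \<le> 1"
  shows "kofn_hazard_ratio n k c p
    = binom_tail_poly n k (p / (1 - p)) / binom_tail_poly n k (p / (c - p))"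
proof -
  have "(p / c) / (1 - p / c) = p / (c - p)"
    using assms by (simp add: field_simps)
  moreover have "0 < binom_tail_poly n k (p / (1 - p))" "0 < binom_tail_poly n k (p / (c - p))"
    using assms by (auto intro!: binom_tail_poly_pos)
  moreover have "0 < real n * real ((n - 1) choose (k - 1))"
    using assms by simp
  ultimately show ?thesis
    using assms by (simp add: kofn_hazard_ratio_def binom_tail_log_deriv_eq_poly field_simps)
qed

lemma binom_tail_poly_quotient_antimono:
  assumes "k \<le> n" "0 < p'" "p' \<le> p" "p < c" "c \<le> 1"
  shows "binom_tail_poly n k (p / (1 - p)) / binom_tail_poly n k (p / (c - p))
    \<le> binom_tail_poly n k (p' / (1 - p')) / binom_tail_poly n k (p' / (c - p'))"
proof -
  define z r z' r' where "z = p' / (1 - p')" and "r = (1 - p') / (c - p')"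
    and "z' = p / (1 - p)" and "r' = (1 - p) / (c - p)"
  have "1 \<le> r" "0 < z" "z \<le> z'"
    using assms by (auto simp: z_def r_def z'_def field_simps)
  moreover have "r \<le> r'"
  proof -
    have "(1 - p') * (c - p) - (1 - p) * (c - p') = (p - p') * (c - 1)"
      by (simp add: algebra_simps)
    also have "\<dots> \<le> 0"
      using assms by (intro mult_nonneg_nonpos) auto
    finally show ?thesis
      using assms by (simp add: r_def r'_def field_simps)
  qed
  ultimately have "binom_tail_poly n k (z * r) * binom_tail_poly n k z'
      \<le> binom_tail_poly n k (z' * r') * binom_tail_poly n k z"
    by (intro binom_tail_poly_ratio_mono)
  moreover have "0 < binom_tail_poly n k (z * r)" "0 < binom_tail_poly n k (z' * r')"
    using \<open>0 < z\<close> \<open>1 \<le> r\<close> \<open>z \<le> z'\<close> \<open>r \<le> r'\<close> assms by (auto intro!: binom_tail_poly_pos)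
  ultimately have "binom_tail_poly n k z' / binom_tail_poly n k (z' * r')
      \<le> binom_tail_poly n k z / binom_tail_poly n k (z * r)"
    by (simp add: divide_simps mult.commute)
  moreover have "z * r = p' / (c - p')" "z' * r' = p / (c - p)"
    using assms by (simp_all add: z_def r_def z'_def r'_def)
  ultimately show ?thesis
    by (simp add: z_def z'_def)
qed

lemma kofn_hazard_ratio_antimono:
  assumes "1 \<le> k" "k \<le> n" "0 < c" "c \<le> 1" "0 < p'" "p' \<le> p" "p \<le> c"
  shows "kofn_hazard_ratio n k c p \<le> kofn_hazard_ratio n k c p'"
proof (cases "p < c")
  case True
  then show ?thesis
    using binom_tail_poly_quotient_antimono [of k n p' p c] assms
    by (simp add: kofn_hazard_ratio_eq_poly)
next
  case False
  then have "p = c"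
    using assms by simp
  show ?thesis
  proof (cases "k = n")
    case True
    then show ?thesis
      using assms \<open>p = c\<close> by (simp add: kofn_hazard_ratio_def binom_tail_log_deriv_top)
  next
    case False
    then show ?thesis
      using assms \<open>p = c\<close>
      by (simp add: kofn_hazard_ratio_def binom_tail_log_deriv_one binom_tail_log_deriv_nonneg)
  qed
qed

section \<open>Survival function of a k-out-of-n system\<close>

lemma less_cSup_iff_mem:
  fixes T :: "'a::conditionally_complete_linorder set"
  assumes "T \<noteq> {}" "bdd_above T"
    and down_closed: "\<And>s s'. s \<in> T \<Longrightarrow> s' \<le> s \<Longrightarrow> s' \<in> T"
    and no_max: "\<And>s. s \<in> T \<Longrightarrow> \<exists>s'\<in>T. s < s'"
  shows "s < Sup T \<longleftrightarrow> s \<in> T"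
  using less_cSup_iff [OF assms(1,2)] down_closed no_max by (meson less_imp_le)

lemma exists_greater_keeping_exceedances:
  fixes x :: "'i \<Rightarrow> real"
  assumes "finite I"
  shows "\<exists>s'>s. \<forall>i\<in>I. s < x i \<longrightarrow> s' < x i"
proof -
  define m where "m = Min (insert (s + 1) (x ` {i\<in>I. s < x i}))"
  have "s < m"
    using assms by (simp add: m_def)
  moreover have "m \<le> x i" if "i \<in> I" "s < x i" for i
    unfolding m_def using assms that by (intro Min_le) auto
  ultimately show ?thesis
    by (intro exI [of _ "(s + m) / 2"]) force
qed

lemma less_kofn_life_iff:
  assumes "1 \<le> k" "k \<le> n"
  shows "s < kofn_life k n x \<longleftrightarrow> k \<le> card {i. i < n \<and> s < x i}"
proof -
  define T where "T = {s. k \<le> card {i. i < n \<and> s < x i}}"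
  have nonempty_if_mem: "{i. i < n \<and> s < x i} \<noteq> {}" if "s \<in> T" for s
  proof
    assume empty: "{i. i < n \<and> s < x i} = {}"
    have "k \<le> card {i. i < n \<and> s < x i}"
      using that by (simp add: T_def)
    then show False
      unfolding empty using assms by simp
  qed
  have "Min (x ` {..<n}) - 1 \<in> T"
  proof -
    have Min_le_x: "Min (x ` {..<n}) \<le> x i" if "i < n" for i
      using that by (intro Min_le) auto
    have "{i. i < n \<and> Min (x ` {..<n}) - 1 < x i} = {..<n}"
      by (auto intro: less_le_trans [OF _ Min_le_x])
    then show ?thesis
      using assms by (simp add: T_def)
  qed
  moreover have "bdd_above T"
  proof (rule bdd_aboveI)
    fix s assume "s \<in> T"
    then obtain i where "i < n" "s < x i"
      using nonempty_if_mem by blast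
    moreover have "x i \<le> Max (x ` {..<n})"
      using \<open>i < n\<close> by (intro Max_ge) auto
    ultimately show "s \<le> Max (x ` {..<n})"
      by linarith
  qed
  moreover have "s' \<in> T" if "s \<in> T" "s' \<le> s" for s s'
  proof -
    have "card {i. i < n \<and> s < x i} \<le> card {i. i < n \<and> s' < x i}"
      using that by (intro card_mono) auto
    then show ?thesis
      using that by (simp add: T_def)
  qed
  moreover have "\<exists>s'\<in>T. s < s'" if "s \<in> T" for s
  proof -
    obtain s' where "s < s'" "\<forall>i\<in>{..<n}. s < x i \<longrightarrow> s' < x i"
      using exists_greater_keeping_exceedances [of "{..<n}" s x] by auto
    then have "card {i. i < n \<and> s < x i} \<le> card {i. i < n \<and> s' < x i}"
      by (intro card_mono) auto
    then show ?thesis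
      using that \<open>s < s'\<close> by (intro bexI [of _ s']) (auto simp: T_def)
  qed
  ultimately have "s < Sup T \<longleftrightarrow> s \<in> T"
    by (intro less_cSup_iff_mem) auto
  then show ?thesis
    by (simp add: kofn_life_def T_def)
qed

lemma prod_if_mem_eq_power_card:
  assumes "A \<subseteq> {..<n}"
  shows "(\<Prod>i<n. if i \<in> A then q else 1 - q) = q ^ card A * (1 - q) ^ (n - card A)"
proof -
  have "finite A"
    using assms finite_subset by blast
  have "(\<Prod>i<n. if i \<in> A then q else 1 - q) = (\<Prod>i\<in>A. q) * (\<Prod>i\<in>{..<n} - A. 1 - q)"
    using assms by (subst prod.If_cases) (simp_all add: Int_absorb1 Diff_eq)
  also have "\<dots> = q ^ card A * (1 - q) ^ (n - card A)"
    using assms \<open>finite A\<close> by (simp add: card_Diff_subset)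
  finally show ?thesis .
qed

lemma sum_subsets_card_ge_eq_binom_tail:
  "(\<Sum>A | A \<subseteq> {..<n} \<and> k \<le> card A. q ^ card A * (1 - q) ^ (n - card A)) = binom_tail n k q"
proof -
  define S where "S = {A. A \<subseteq> {..<n} \<and> k \<le> card A}"
  have "finite S"
    unfolding S_def by (rule finite_subset [of _ "Pow {..<n}"]) auto
  moreover have "card ` S \<subseteq> {k..n}"
    unfolding S_def using card_mono [of "{..<n}"] by fastforce
  ultimately have "(\<Sum>A\<in>S. q ^ card A * (1 - q) ^ (n - card A))
      = (\<Sum>j=k..n. \<Sum>A | A \<in> S \<and> card A = j. q ^ card A * (1 - q) ^ (n - card A))"
    by (intro sum.group [symmetric]) auto
  also have "\<dots> = (\<Sum>j=k..n. real (n choose j) * q ^ j * (1 - q) ^ (n - j))"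
  proof (rule sum.cong [OF refl])
    fix j assume "j \<in> {k..n}"
    then have "{A. A \<in> S \<and> card A = j} = {A. A \<subseteq> {..<n} \<and> card A = j}"
      by (auto simp: S_def)
    then show "(\<Sum>A | A \<in> S \<and> card A = j. q ^ card A * (1 - q) ^ (n - card A))
        = real (n choose j) * q ^ j * (1 - q) ^ (n - j)"
      using n_subsets [of "{..<n}" j] by simp
  qed
  finally show ?thesis
    by (simp add: S_def binom_tail_def)
qed

lemma (in prob_space) prob_exceedance_set_eq:
  assumes indep: "indep_vars (\<lambda>_. borel) Z {..<n}"
    and surv_eq: "\<And>i. i < n \<Longrightarrow> surv M (Z i) s = q" and "A \<subseteq> {..<n}"
  shows "prob {\<omega>\<in>space M. {i. i < n \<and> s < Z i \<omega>} = A} = q ^ card A * (1 - q) ^ (n - card A)"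
proof (cases "n = 0")
  case True
  then show ?thesis
    using \<open>A \<subseteq> {..<n}\<close> by (simp add: prob_space)
next
  case False
  define B where "B i = (if i \<in> A then {s<..} else {..s})" for i
  have Z_meas: "Z i \<in> borel_measurable M" if "i < n" for i
    using indep that by (auto simp: indep_vars_def)
  have prob_B: "prob (Z i -` B i \<inter> space M) = (if i \<in> A then q else 1 - q)" if "i < n" for i
  proof -
    have "prob (Z i -` {s<..} \<inter> space M) = q"
      using surv_eq [OF that] by (simp add: surv_def vimage_def Int_def conj_commute)
    moreover have "Z i -` {..s} \<inter> space M = space M - (Z i -` {s<..} \<inter> space M)"
      by auto
    moreover have "Z i -` {s<..} \<inter> space M \<in> events"
      using Z_meas [OF that] by measurable
    ultimately show ?thesis
      by (simp add: B_def prob_compl)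
  qed
  have "{\<omega>\<in>space M. {i. i < n \<and> s < Z i \<omega>} = A} = (\<Inter>i\<in>{..<n}. Z i -` B i \<inter> space M)"
    using False \<open>A \<subseteq> {..<n}\<close> by (auto simp: B_def not_less split: if_splits)
  also have "prob \<dots> = (\<Prod>i<n. prob (Z i -` B i \<inter> space M))"
    using False by (intro indep_varsD [OF indep]) (auto simp: B_def)
  also have "\<dots> = (\<Prod>i<n. if i \<in> A then q else 1 - q)"
    by (simp add: prob_B)
  finally show ?thesis
    using prod_if_mem_eq_power_card [OF \<open>A \<subseteq> {..<n}\<close>] by simp
qed

lemma (in prob_space) surv_kofn_rv:
  assumes indep: "indep_vars (\<lambda>_. borel) Z {..<n}" and "1 \<le> k" "k \<le> n"
    and surv_eq: "\<And>i. i < n \<Longrightarrow> surv M (Z i) s = q"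
  shows "surv M (kofn_rv k n Z) s = binom_tail n k q"
proof -
  define S where "S = {A. A \<subseteq> {..<n} \<and> k \<le> card A}"
  define E where "E A = {\<omega>\<in>space M. {i. i < n \<and> s < Z i \<omega>} = A}" for A
  have "finite S"
    unfolding S_def by (rule finite_subset [of _ "Pow {..<n}"]) auto
  have "E A \<in> events" for A
  proof -
    have "Z i \<in> borel_measurable M" if "i < n" for i
      using indep that by (auto simp: indep_vars_def)
    then show ?thesis
      unfolding E_def set_eq_iff by measurable
  qed
  moreover have "{\<omega>\<in>space M. s < kofn_rv k n Z \<omega>} = (\<Union>A\<in>S. E A)"
    using less_kofn_life_iff [OF \<open>1 \<le> k\<close> \<open>k \<le> n\<close>] by (auto simp: kofn_rv_def S_def E_def)
  moreover have "disjoint_family_on E S"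
    by (auto simp: disjoint_family_on_def E_def)
  ultimately have "surv M (kofn_rv k n Z) s = (\<Sum>A\<in>S. prob (E A))"
    unfolding surv_def using \<open>finite S\<close> by (simp add: finite_measure_finite_Union image_subset_iff)
  also have "\<dots> = (\<Sum>A\<in>S. q ^ card A * (1 - q) ^ (n - card A))"
    using prob_exceedance_set_eq [OF indep surv_eq] by (intro sum.cong) (auto simp: S_def E_def)
  also have "\<dots> = binom_tail n k q"
    unfolding S_def by (rule sum_subsets_card_ge_eq_binom_tail)
  finally show ?thesis .
qed

section \<open>Survival functions with a continuous density\<close>

lemma (in prob_space) surv_antimono:
  assumes "W \<in> borel_measurable M" "a \<le> b"
  shows "surv M W b \<le> surv M W a"
  unfolding surv_def using assms by (intro finite_measure_mono) auto

lemma (in prob_space) surv_distributed_eq_integral: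
  assumes distr: "distributed M lborel W (\<lambda>x. ennreal (f x))"
    and f_zero: "\<And>x. x < 0 \<Longrightarrow> f x = 0" and f_nonneg: "\<And>x. 0 \<le> f x"
    and f_cont: "continuous_on {0..} f"
  shows "surv M W z = 1 - integral {0..z} f"
proof -
  have f_int: "f integrable_on {0..z}"
    by (intro integrable_continuous_interval continuous_on_subset [OF f_cont]) auto
  have "((\<lambda>x. if x \<in> {0..z} then f x else 0) has_integral integral {0..z} f) UNIV"
    using integrable_integral [OF f_int] by (simp only: has_integral_restrict_UNIV)
  moreover have "(\<lambda>x. if x \<in> {0..z} then f x else 0) = (\<lambda>x. f x * indicator {0..z} x)"
    by (auto simp: indicator_def)
  moreover have "f \<in> borel_measurable borel"
    using distributed_real_measurable [OF _ distr] f_nonneg by simp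
  ultimately have "(\<integral>\<^sup>+x. ennreal (f x * indicator {0..z} x) \<partial>lborel) = ennreal (integral {0..z} f)"
    using f_nonneg by (intro nn_integral_has_integral_lborel) auto
  moreover have "emeasure M (W -` {..z} \<inter> space M)
      = (\<integral>\<^sup>+x. ennreal (f x) * indicator {..z} x \<partial>lborel)"
    by (rule distributed_emeasure [OF distr]) simp
  moreover have "(\<integral>\<^sup>+x. ennreal (f x) * indicator {..z} x \<partial>lborel)
      = (\<integral>\<^sup>+x. ennreal (f x * indicator {0..z} x) \<partial>lborel)"
    by (intro nn_integral_cong) (auto simp: indicator_def f_zero not_le)
  ultimately have "prob (W -` {..z} \<inter> space M) = integral {0..z} f"
    using integral_nonneg [OF f_int] f_nonneg by (simp add: measure_def)
  moreover have "{\<omega>\<in>space M. z < W \<omega>} = space M - (W -` {..z} \<inter> space M)"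
    by auto
  moreover have "W -` {..z} \<inter> space M \<in> events"
    using distributed_measurable [OF distr] by measurable
  ultimately show ?thesis
    unfolding surv_def by (simp add: prob_compl)
qed

lemma integral_upper_less:
  fixes f :: "real \<Rightarrow> real"
  assumes "continuous_on {0..} f" "\<And>x. 0 \<le> x \<Longrightarrow> 0 < f x" "0 \<le> a" "a < b"
  shows "integral {0..a} f < integral {0..b} f"
proof -
  have "continuous_on {0..b} f"
    using assms by (auto intro: continuous_on_subset)
  then have "integral {0..b} f = integral {0..a} f + integral {a..b} f"
    using Henstock_Kurzweil_Integration.integral_combine
        [OF _ _ integrable_continuous_interval [OF \<open>continuous_on {0..b} f\<close>], of a] assms
    by simp
  moreover have "integral (cbox a b) (\<lambda>_. 0) < integral (cbox a b) f"
    using assms \<open>continuous_on {0..b} f\<close>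
    by (intro integral_less) (auto intro: continuous_on_subset)
  ultimately show ?thesis
    by simp
qed

lemma (in prob_space) surv_distributed_pos:
  assumes distr: "distributed M lborel W (\<lambda>x. ennreal (f x))"
    and f_zero: "\<And>x. x < 0 \<Longrightarrow> f x = 0" and f_pos: "\<And>x. 0 \<le> x \<Longrightarrow> 0 < f x"
    and f_cont: "continuous_on {0..} f"
  shows "0 < surv M W z"
proof -
  have f_nonneg: "0 \<le> f x" for x
    using f_zero f_pos by (cases "x < 0") (auto intro: less_imp_le)
  note surv_eq = surv_distributed_eq_integral [OF distr f_zero f_nonneg f_cont]
  show ?thesis
  proof (cases "z < 0")
    case True
    then show ?thesis
      by (simp add: surv_eq)
  next
    case False
    then have "integral {0..z} f < integral {0..z + 1} f"
      using f_cont f_pos by (intro integral_upper_less) auto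
    moreover have "0 \<le> surv M W (z + 1)"
      by (simp add: surv_def)
    ultimately show ?thesis
      by (simp add: surv_eq)
  qed
qed

lemma (in prob_space) surv_distributed_has_right_derivative:
  assumes distr: "distributed M lborel W (\<lambda>x. ennreal (f x))"
    and f_zero: "\<And>x. x < 0 \<Longrightarrow> f x = 0" and f_nonneg: "\<And>x. 0 \<le> f x"
    and f_cont: "continuous_on {0..} f" and "0 \<le> z"
  shows "(surv M W has_real_derivative - f z) (at_right z)"
proof -
  have "((\<lambda>u. integral {0..u} f) has_real_derivative f z) (at z within {0..z + 1})"
    using \<open>0 \<le> z\<close> by (intro integral_has_real_derivative continuous_on_subset [OF f_cont]) auto
  then have "((\<lambda>u. integral {0..u} f) has_real_derivative f z) (at z within {z..z + 1})"
    by (rule DERIV_subset) (use \<open>0 \<le> z\<close> in auto)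
  moreover have "at z within {z..z + 1} = at_right z"
    by (rule at_within_Icc_at_right) simp
  ultimately have "((\<lambda>u. 1 - integral {0..u} f) has_real_derivative 0 - f z) (at_right z)"
    by (intro DERIV_diff DERIV_const) simp
  moreover have "surv M W = (\<lambda>u. 1 - integral {0..u} f)"
    using surv_distributed_eq_integral [OF distr f_zero f_nonneg f_cont] by (intro ext)
  ultimately show ?thesis
    by simp
qed

section \<open>Hazard rates of k-out-of-n systems\<close>

lemma resid_surv_eq_surv:
  "resid_surv M W t x = surv M W (max t (t + x)) / surv M W t"
proof -
  have "{\<omega>\<in>space M. t + x < W \<omega> \<and> t < W \<omega>} = {\<omega>\<in>space M. max t (t + x) < W \<omega>}"
    by auto
  then show ?thesis
    by (simp add: resid_surv_def surv_def)
qed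

lemma hazard_eqI:
  assumes "(G has_real_derivative D) (at_right x)"
  shows "hazard G x = - D / G x"
proof -
  have "(THE D. (G has_real_derivative D) (at_right x)) = D"
  proof (rule the_equality)
    fix D' assume "(G has_real_derivative D') (at_right x)"
    then show "D' = D"
      using assms by (rule has_field_derivative_unique) simp
  qed (rule assms)
  then show ?thesis
    by (simp add: hazard_def dens_of_surv_def)
qed

lemma hazard_divide_const:
  assumes "(G has_real_derivative D) (at_right x)" "C \<noteq> 0"
  shows "hazard (\<lambda>y. G y / C) x = hazard G x"
  using hazard_eqI [OF assms(1)] hazard_eqI [OF DERIV_cdivide [OF assms(1), of C]] assms(2)
  by simp

lemma hazard_binom_tail_comp:
  assumes "1 \<le> k" "k \<le> n" "(G has_real_derivative D) (at_right x)"
  shows "hazard (\<lambda>y. binom_tail n k (G y)) x = - D * binom_tail_log_deriv n k (G x)"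
  using hazard_eqI [OF DERIV_chain2 [OF binom_tail_has_real_derivative [OF assms(1,2)] assms(3)]]
  by (simp add: binom_tail_log_deriv_def)

lemma has_real_derivative_residual_at_right:
  assumes "(S has_real_derivative D) (at_right (t + x))" "0 \<le> x"
  shows "((\<lambda>y. S (max t (t + y))) has_real_derivative D) (at_right x)"
proof -
  have "((+) t has_real_derivative 1) (at x within {x<..})"
    by (rule derivative_eq_intros refl)+ simp
  moreover have "(+) t ` {x<..} = {t + x<..}"
    by (auto intro: image_eqI [where x = "_ - t"])
  ultimately have "((\<lambda>y. S (t + y)) has_real_derivative D * 1) (at_right x)"
    using DERIV_image_chain [of S D "(+) t" x "{x<..}" 1] assms(1) by (simp add: o_def)
  moreover have "\<forall>\<^sub>F y in at_right x. S (max t (t + y)) = S (t + y)"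
    using eventually_at_right_less [of x] by eventually_elim (use assms(2) in auto)
  ultimately show ?thesis
    using assms(2) by (subst has_field_derivative_cong_eventually) auto
qed

lemma hazard_ratio_used_vs_residual_kofn:
  assumes "1 \<le> k" "k \<le> n" "0 \<le> x"
    and S_deriv: "(S has_real_derivative - D) (at_right (t + x))" and "D \<noteq> 0"
    and "0 < S t" "S t \<le> 1"
  shows "hazard (\<lambda>y. binom_tail n k (S (max t (t + y)) / S t)) x
       / hazard (\<lambda>y. binom_tail n k (S (max t (t + y))) / binom_tail n k (S t)) x
     = kofn_hazard_ratio n k (S t) (S (t + x))"
proof -
  have R_deriv: "((\<lambda>y. S (max t (t + y))) has_real_derivative - D) (at_right x)"
    using has_real_derivative_residual_at_right [OF S_deriv \<open>0 \<le> x\<close>] .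
  have "hazard (\<lambda>y. binom_tail n k (S (max t (t + y)) / S t)) x
      = D / S t * binom_tail_log_deriv n k (S (t + x) / S t)"
    using hazard_binom_tail_comp [OF \<open>1 \<le> k\<close> \<open>k \<le> n\<close> DERIV_cdivide [OF R_deriv, of "S t"]]
      \<open>0 \<le> x\<close> by simp
  moreover have "hazard (\<lambda>y. binom_tail n k (S (max t (t + y))) / binom_tail n k (S t)) x
      = D * binom_tail_log_deriv n k (S (t + x))"
    using hazard_divide_const [OF DERIV_chain2 [OF binom_tail_has_real_derivative R_deriv]]
      hazard_binom_tail_comp [OF \<open>1 \<le> k\<close> \<open>k \<le> n\<close> R_deriv] binom_tail_pos [of k n "S t"] assms
    by simp
  ultimately show ?thesis
    using \<open>D \<noteq> 0\<close> by (simp add: kofn_hazard_ratio_def)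
qed

lemma c_order_used_vs_residual_kofn:
  assumes "1 \<le> k" "k \<le> n" "S t \<le> 1"
    and S_pos: "\<And>z. t \<le> z \<Longrightarrow> 0 < S z"
    and S_antimono: "\<And>a b. t \<le> a \<Longrightarrow> a \<le> b \<Longrightarrow> S b \<le> S a"
    and S_deriv: "\<And>z. t \<le> z \<Longrightarrow> (S has_real_derivative - f z) (at_right z)"
    and f_pos: "\<And>z. t \<le> z \<Longrightarrow> 0 < f z"
  shows "c_order (\<lambda>x. binom_tail n k (S (max t (t + x)) / S t))
      (\<lambda>x. binom_tail n k (S (max t (t + x))) / binom_tail n k (S t))"
proof -
  have ratio: "hazard (\<lambda>y. binom_tail n k (S (max t (t + y)) / S t)) x
       / hazard (\<lambda>y. binom_tail n k (S (max t (t + y))) / binom_tail n k (S t)) x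
     = kofn_hazard_ratio n k (S t) (S (t + x))" if "0 \<le> x" for x
    using that S_pos [of t] f_pos [of "t + x"]
    by (intro hazard_ratio_used_vs_residual_kofn [OF assms(1,2) that S_deriv] assms) auto
  have "mono_on {0..} (\<lambda>x. kofn_hazard_ratio n k (S t) (S (t + x)))"
    using S_pos S_antimono by (intro mono_onI kofn_hazard_ratio_antimono assms) auto
  then show ?thesis
    unfolding c_order_def by (simp add: monotone_on_def ratio)
qed

theorem corollary5p1:
  fixes M :: "'a measure" and N :: "'b measure"
    and X :: "nat \<Rightarrow> 'a \<Rightarrow> real" and Y :: "nat \<Rightarrow> 'b \<Rightarrow> real"
    and f :: "real \<Rightarrow> real" and k n :: nat and t :: real
  assumes "prob_space M" and "prob_space N"
    and "1 \<le> k" and "k \<le> n"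
    and "\<forall>x<0. f x = 0" and "\<forall>x\<ge>0. 0 < f x" and "continuous_on {0..} f"
    and "\<forall>i<n. distributed M lborel (X i) (\<lambda>x. ennreal (f x))"
    and "prob_space.indep_vars M (\<lambda>_. borel) X {..<n}"
    and "0 \<le> t"
    and "prob_space.indep_vars N (\<lambda>_. borel) Y {..<n}"
    and "\<forall>i<n. \<forall>x. surv N (Y i) x = resid_surv M (X i) t x"
  shows "c_order (surv N (kofn_rv k n Y)) (resid_surv M (kofn_rv k n X) t)"
proof -
  interpret M: prob_space M by fact
  interpret N: prob_space N by fact
  have f_zero: "\<And>x. x < 0 \<Longrightarrow> f x = 0" and f_pos: "\<And>x. 0 \<le> x \<Longrightarrow> 0 < f x"
    using assms(5,6) by auto
  then have f_nonneg: "\<And>x. 0 \<le> f x"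
    by (metis less_imp_le not_le)
  have distr: "\<And>i. i < n \<Longrightarrow> distributed M lborel (X i) (\<lambda>x. ennreal (f x))"
    using assms(8) by auto
  then have distr0: "distributed M lborel (X 0) (\<lambda>x. ennreal (f x))"
    using assms(3,4) by simp
  define S where "S = surv M (X 0)"
  have surv_X: "surv M (X i) = S" if "i < n" for i
    using M.surv_distributed_eq_integral [OF distr [OF that] f_zero f_nonneg assms(7)]
      M.surv_distributed_eq_integral [OF distr0 f_zero f_nonneg assms(7)]
    by (simp add: S_def fun_eq_iff)
  have "surv N (kofn_rv k n Y) = (\<lambda>x. binom_tail n k (S (max t (t + x)) / S t))"
    using N.surv_kofn_rv [OF assms(11,3,4)] assms(12) surv_X
    by (simp add: resid_surv_eq_surv fun_eq_iff)
  moreover have "resid_surv M (kofn_rv k n X) t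
      = (\<lambda>x. binom_tail n k (S (max t (t + x))) / binom_tail n k (S t))"
    using M.surv_kofn_rv [OF assms(9,3,4)] surv_X by (simp add: resid_surv_eq_surv fun_eq_iff)
  moreover have "c_order (\<lambda>x. binom_tail n k (S (max t (t + x)) / S t))
      (\<lambda>x. binom_tail n k (S (max t (t + x))) / binom_tail n k (S t))"
  proof (rule c_order_used_vs_residual_kofn [OF assms(3,4)])
    show "S t \<le> 1" "0 < S z" for z
      using M.surv_distributed_pos [OF distr0 f_zero f_pos assms(7)] by (simp_all add: S_def surv_def)
    show "S b \<le> S a" if "a \<le> b" for a b
      unfolding S_def using distributed_measurable [OF distr0] that by (intro M.surv_antimono) auto
    show "(S has_real_derivative - f z) (at_right z)" "0 < f z" if "t \<le> z" for z
      unfolding S_def using assms(10) that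
      by (auto intro: M.surv_distributed_has_right_derivative [OF distr0 f_zero f_nonneg assms(7)] f_pos)
  qed
  ultimately show ?thesis
    by simp
qed

end
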